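(* Let $G=(V,E)$ be a finite undirected simple graph with an even number of vertices, and let $\mathrm{perfmat}\, G$ denote the number of perfect matchings of $G$. Then $$\mathrm{perfmat}\, G \le \prod_{v\in V} \big((\deg v)!\big)^{\frac{1}{2\deg v}},$$ with the convention $0^{1/0}=0$ (so the right-hand side is $0$ if some vertex has degree $0$). Equivalently, for every symmetric matrix $A\in\{0,1\}^{2n\times 2n}$ with zero diagonal and row sums $r_1,\dots,r_{2n}$, $$\mathrm{hafn}\, A \le \prod_{i=1}^{2n} (r_i!)^{\frac{1}{2r_i}}.$$
   Context: For a real symmetric $2n\times 2n$ matrix $A=[a_{ij}]$, the hafnian is $\mathrm{hafn}\, A=\sum \prod_{k=1}^n a_{i_kj_k}$, where the sum runs over all partitions $\{\{i_1,j_1\},\dots,\{i_n,j_n\}\}$ of $\{1,\dots,2n\}$ into $n$ pairs (with $i_k<j_k$), i.e. over all perfect matchings of the complete graph $K_{2n}$. For the adjacency matrix $A(G)$ of a graph $G$ on vertex set $\{1,\dots,2n\}$, $\mathrm{hafn}\,A(G)=\mathrm{perfmat}\,G$, and the $i$-th row sum $r_i$ is $\deg i$. *)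

theory Defs
  imports Complex_Main
begin

definition simple_graph :: "'a set \<Rightarrow> ('a \<Rightarrow> 'a \<Rightarrow> bool) \<Rightarrow> bool" where
  "simple_graph V E \<longleftrightarrow> finite V \<and> (\<forall>u v. E u v \<longrightarrow> u \<in> V \<and> v \<in> V)
     \<and> (\<forall>u v. E u v \<longrightarrow> E v u) \<and> (\<forall>v. \<not> E v v)"

definition graph_edges :: "'a set \<Rightarrow> ('a \<Rightarrow> 'a \<Rightarrow> bool) \<Rightarrow> 'a set set" where
  "graph_edges V E = {{u, v} | u v. u \<in> V \<and> v \<in> V \<and> E u v}"

definition degree :: "'a set \<Rightarrow> ('a \<Rightarrow> 'a \<Rightarrow> bool) \<Rightarrow> 'a \<Rightarrow> nat" where
  "degree V E v = card {u \<in> V. E v u}"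

definition perfect_matching :: "'a set \<Rightarrow> ('a \<Rightarrow> 'a \<Rightarrow> bool) \<Rightarrow> 'a set set \<Rightarrow> bool" where
  "perfect_matching V E M \<longleftrightarrow> M \<subseteq> graph_edges V E \<and> (\<forall>v \<in> V. \<exists>!e \<in> M. v \<in> e)"

definition perfmat :: "'a set \<Rightarrow> ('a \<Rightarrow> 'a \<Rightarrow> bool) \<Rightarrow> nat" where
  "perfmat V E = card {M. perfect_matching V E M}"

definition bregman_factor :: "nat \<Rightarrow> real" where
  "bregman_factor d = (if d = 0 then 0 else (fact d) powr (1 / (2 * real d)))"

end

theory Submission
  imports Defs "HOL-Combinatorics.Orbits"
begin

text \<open>Two perfect matchings \<open>M\<^sub>1, M\<^sub>2\<close> of \<open>G\<close>, viewed as fixed-point-free involutions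
  \<open>m\<^sub>1, m\<^sub>2\<close> of \<open>V\<close>, determine a permutation \<open>\<sigma>\<close> of \<open>V\<close> with \<open>\<sigma> v\<close> adjacent to \<open>v\<close>:
  the union of the matchings consists of doubled edges and even alternating cycles, and
  \<open>\<sigma>\<close> orients each cycle, following \<open>m\<^sub>1\<close> from one colour class and \<open>m\<^sub>2\<close> from the other.
  Choosing the class by a fixed numbering of the vertices makes the pair \<open>(M\<^sub>1, M\<^sub>2)\<close>
  recoverable from \<open>\<sigma>\<close>, so \<open>perfmat G\<^sup>2\<close> is at most the permanent of the adjacency matrix.
  Bregman's theorem, \<open>per A \<le> \<Prod>\<^sub>i (r\<^sub>i!)\<^bsup>1/r\<^sub>i\<^esup>\<close> for 0-1 matrices, proved here by
  Schrijver's induction from the convexity of \<open>x ln x\<close>, then gives the bound after taking square roots.\<close>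

section \<open>The log-sum inequality\<close>

lemma diff_le_mult_ln_diff:
  fixes x c :: real
  assumes "x \<ge> 0" "c > 0"
  shows "x - c \<le> x * (ln x - ln c)"
proof (cases "x = 0")
  case True
  then show ?thesis using assms by simp
next
  case False
  with assms have "x > 0" by simp
  have "x * (ln c - ln x) = x * ln (c / x)"
    using \<open>x > 0\<close> assms by (simp add: ln_div)
  also have "\<dots> \<le> x * (c / x - 1)"
    using ln_le_minus_one[of "c / x"] \<open>x > 0\<close> assms by (intro mult_left_mono) auto
  also have "\<dots> = c - x"
    using \<open>x > 0\<close> by (simp add: field_simps)
  finally show ?thesis by (simp add: algebra_simps)
qed

lemma sum_mult_ln_sum_le:
  fixes t :: "'b \<Rightarrow> real"
  assumes "finite K" and nonneg: "\<And>k. k \<in> K \<Longrightarrow> t k \<ge> 0" and pos: "sum t K > 0"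
  shows "sum t K * ln (sum t K) \<le> sum t K * ln (card K) + (\<Sum>k\<in>K. t k * ln (t k))"
proof -
  define c where "c = sum t K / card K"
  have card_pos: "real (card K) > 0"
    using pos \<open>finite K\<close> card_gt_0_iff by fastforce
  then have "c > 0" using pos by (simp add: c_def)
  have "0 = (\<Sum>k\<in>K. t k - c)" using card_pos by (simp add: sum_subtractf c_def)
  also have "\<dots> \<le> (\<Sum>k\<in>K. t k * (ln (t k) - ln c))"
    using diff_le_mult_ln_diff nonneg \<open>c > 0\<close> by (intro sum_mono) auto
  also have "\<dots> = (\<Sum>k\<in>K. t k * ln (t k)) - sum t K * ln c"
    by (simp add: right_diff_distrib sum_subtractf sum_distrib_right)
  also have "ln c = ln (sum t K) - ln (card K)"
    using pos card_pos by (simp add: c_def ln_div)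
  finally show ?thesis by (simp add: algebra_simps)
qed

lemma card_ln_card_le_sum_ln_card_fibres:
  assumes "finite S" "finite K" "g ` S \<subseteq> K"
  shows "real (card S) * ln (card S)
    \<le> real (card S) * ln (card K) + (\<Sum>x\<in>S. ln (card {y\<in>S. g y = g x}))"
proof (cases "S = {}")
  case True
  then show ?thesis by simp
next
  case False
  define n where "n k = real (card {x\<in>S. g x = k})" for k
  have card_S: "real (card S) = (\<Sum>k\<in>K. n k)"
    using sum.group[OF assms, of "\<lambda>_. 1::real"] by (simp add: n_def)
  have "(\<Sum>x\<in>S. ln (card {y\<in>S. g y = g x})) = (\<Sum>k\<in>K. \<Sum>x\<in>{x\<in>S. g x = k}. ln (n k))"
    unfolding sum.group[OF assms, symmetric] n_def by (intro sum.cong) auto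
  also have "\<dots> = (\<Sum>k\<in>K. n k * ln (n k))"
    by (simp add: n_def)
  moreover have "sum n K > 0"
    using False \<open>finite S\<close> by (simp add: card_S[symmetric] card_gt_0_iff)
  ultimately show ?thesis
    using sum_mult_ln_sum_le[OF \<open>finite K\<close>, of n] card_S by (simp add: n_def)
qed

lemma ln_le_iff_le_exp:
  fixes x y :: real
  assumes "x > 0"
  shows "ln x \<le> y \<longleftrightarrow> x \<le> exp y"
  using exp_le_cancel_iff[of "ln x" y] assms by simp

section \<open>Bregman's theorem\<close>

text \<open>\<open>card (perm_terms R C P)\<close> is the permanent of the 0-1 matrix with rows \<open>R\<close>, columns \<open>C\<close>
  and entries \<open>P i k\<close>.\<close>
definition perm_terms :: "'a set \<Rightarrow> 'b set \<Rightarrow> ('a \<Rightarrow> 'b \<Rightarrow> bool) \<Rightarrow> ('a \<Rightarrow> 'b) set" where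
  "perm_terms R C P = {f \<in> R \<rightarrow>\<^sub>E C. inj_on f R \<and> (\<forall>i\<in>R. P i (f i))}"

definition ln_fact_root :: "nat \<Rightarrow> real" where
  "ln_fact_root r = ln (fact r) / r"

lemma finite_perm_terms: "finite R \<Longrightarrow> finite C \<Longrightarrow> finite (perm_terms R C P)"
  unfolding perm_terms_def by (rule finite_subset[of _ "R \<rightarrow>\<^sub>E C"]) (auto intro: finite_PiE)

lemma perm_terms_bij_betw:
  assumes "f \<in> perm_terms R C P" "finite R" "finite C" "card R = card C"
  shows "bij_betw f R C"
proof -
  have "f ` R \<subseteq> C" "inj_on f R" using assms(1) by (auto simp: perm_terms_def)
  moreover from this have "card (f ` R) = card C" using assms(4) by (simp add: card_image)
  ultimately show ?thesis using assms(3) by (simp add: bij_betw_def card_subset_eq)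
qed

lemma bij_betw_perm_terms_fix:
  assumes "i \<in> R" "k \<in> C" "P i k"
  shows "bij_betw (\<lambda>f. restrict f (R - {i}))
    {f \<in> perm_terms R C P. f i = k} (perm_terms (R - {i}) (C - {k}) P)"
proof (rule bij_betw_byWitness[where f' = "\<lambda>g. g(i := k)"])
  show "\<forall>f\<in>{f \<in> perm_terms R C P. f i = k}. (restrict f (R - {i}))(i := k) = f"
    using assms by (auto simp: perm_terms_def fun_eq_iff PiE_def extensional_def)
  show "\<forall>g\<in>perm_terms (R - {i}) (C - {k}) P. restrict (g(i := k)) (R - {i}) = g"
    by (auto simp: perm_terms_def fun_eq_iff PiE_def extensional_def)
  show "(\<lambda>f. restrict f (R - {i})) ` {f \<in> perm_terms R C P. f i = k}
      \<subseteq> perm_terms (R - {i}) (C - {k}) P"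
    using assms by (fastforce simp: perm_terms_def inj_on_def)
  show "(\<lambda>g. g(i := k)) ` perm_terms (R - {i}) (C - {k}) P \<subseteq> {f \<in> perm_terms R C P. f i = k}"
  proof
    fix f assume "f \<in> (\<lambda>g. g(i := k)) ` perm_terms (R - {i}) (C - {k}) P"
    then obtain g where g: "g \<in> perm_terms (R - {i}) (C - {k}) P" and f: "f = g(i := k)"
      by blast
    then have "\<And>j. j \<in> R - {i} \<Longrightarrow> g j \<in> C - {k}"
      by (auto simp: perm_terms_def)
    with g assms show "f \<in> {f \<in> perm_terms R C P. f i = k}"
      unfolding f by (auto simp: perm_terms_def inj_on_def PiE_def extensional_def)
  qed
qed

lemma ln_fact_root_step:
  assumes "r \<ge> 1"
  shows "ln r + real (r - 1) * ln_fact_root (r - 1) = r * ln_fact_root r"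
proof -
  have "fact r = real r * fact (r - 1)"
    using assms fact_reduce[of r] by simp
  then have "ln (fact r) = ln r + ln (fact (r - 1))"
    using assms by (simp add: ln_mult)
  then show ?thesis
    using assms by (cases "r = 1") (simp_all add: ln_fact_root_def)
qed

lemma sum_ln_fact_root_remove:
  fixes Q :: "'b \<Rightarrow> bool"
  assumes "finite C" "c \<in> C" "Q c"
  defines "r \<equiv> card {k\<in>C. Q k}"
  shows "(\<Sum>k\<in>C - {c}. ln_fact_root (card {l\<in>C - {k}. Q l})) + ln r = card C * ln_fact_root r"
proof -
  have "r \<ge> 1"
    using assms by (auto simp: r_def Suc_le_eq card_gt_0_iff)
  have "r \<le> card C"
    unfolding r_def using assms by (intro card_mono) auto
  have "card {l\<in>C - {k}. Q l} = (if Q k then r - 1 else r)" if "k \<in> C" for k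
  proof -
    have "{l\<in>C - {k}. Q l} = {l\<in>C. Q l} - {k}" by auto
    then show ?thesis using assms that by (simp add: r_def card_Diff_singleton_if)
  qed
  then have "(\<Sum>k\<in>C - {c}. ln_fact_root (card {l\<in>C - {k}. Q l}))
      = (\<Sum>k\<in>C - {c}. if Q k then ln_fact_root (r - 1) else ln_fact_root r)"
    by (intro sum.cong) auto
  also have "\<dots> = card {k\<in>C - {c}. Q k} * ln_fact_root (r - 1)
      + card {k\<in>C - {c}. \<not> Q k} * ln_fact_root r"
    using assms by (simp add: sum.If_cases Int_def Collect_conj_eq[symmetric])
  also have "card {k\<in>C - {c}. Q k} = r - 1"
  proof -
    have "{k\<in>C - {c}. Q k} = {k\<in>C. Q k} - {c}" by auto
    then show ?thesis using assms by (simp add: r_def card_Diff_singleton_if)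
  qed
  also have "card {k\<in>C - {c}. \<not> Q k} = card C - r"
  proof -
    have "{k\<in>C - {c}. \<not> Q k} = C - {k\<in>C. Q k}" using assms by auto
    then show ?thesis using assms by (simp add: r_def card_Diff_subset)
  qed
  finally show ?thesis
    using ln_fact_root_step[OF \<open>r \<ge> 1\<close>] \<open>r \<le> card C\<close> by (simp add: of_nat_diff algebra_simps)
qed

lemma sum_sum_remove_swap:
  assumes "finite A"
  shows "(\<Sum>i\<in>A. \<Sum>j\<in>A - {i}. g i j) = (\<Sum>j\<in>A. \<Sum>i\<in>A - {j}. g i j)"
  using sum.swap_restrict[OF assms assms, of g "\<lambda>i j. j \<noteq> i"]
  by (simp add: set_diff_eq conj_commute eq_commute)

lemma sum_ln_fact_root_minors:
  assumes "finite R" "finite C" "card R = card C" "f \<in> perm_terms R C P"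
  shows "(\<Sum>i\<in>R. ln (card {k\<in>C. P i k}) + (\<Sum>j\<in>R - {i}. ln_fact_root (card {k\<in>C - {f i}. P j k})))
    = card C * (\<Sum>i\<in>R. ln_fact_root (card {k\<in>C. P i k}))"
proof -
  have bij: "bij_betw f R C"
    using perm_terms_bij_betw assms by blast
  have swap: "(\<Sum>i\<in>R. \<Sum>j\<in>R - {i}. ln_fact_root (card {k\<in>C - {f i}. P j k}))
      = (\<Sum>j\<in>R. \<Sum>i\<in>R - {j}. ln_fact_root (card {k\<in>C - {f i}. P j k}))"
    by (rule sum_sum_remove_swap[OF \<open>finite R\<close>])
  have "(\<Sum>i\<in>R. ln (card {k\<in>C. P i k}) + (\<Sum>j\<in>R - {i}. ln_fact_root (card {k\<in>C - {f i}. P j k})))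
      = (\<Sum>j\<in>R. ln (card {k\<in>C. P j k}) + (\<Sum>i\<in>R - {j}. ln_fact_root (card {k\<in>C - {f i}. P j k})))"
    by (simp only: sum.distrib swap)
  also have "\<dots> = (\<Sum>j\<in>R. card C * ln_fact_root (card {k\<in>C. P j k}))"
  proof (rule sum.cong[OF refl])
    fix j assume "j \<in> R"
    then have "f j \<in> C" "P j (f j)"
      using assms(4) by (auto simp: perm_terms_def)
    have "bij_betw f (R - {j}) (C - {f j})"
      using bij_betw_DiffI[OF bij, of "{j}" "{f j}"] \<open>j \<in> R\<close> \<open>f j \<in> C\<close> by auto
    then have "(\<Sum>i\<in>R - {j}. ln_fact_root (card {k\<in>C - {f i}. P j k}))
        = (\<Sum>k\<in>C - {f j}. ln_fact_root (card {l\<in>C - {k}. P j l}))"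
      by (rule sum.reindex_bij_betw)
    then show "ln (card {k\<in>C. P j k}) + (\<Sum>i\<in>R - {j}. ln_fact_root (card {k\<in>C - {f i}. P j k}))
        = card C * ln_fact_root (card {k\<in>C. P j k})"
      using sum_ln_fact_root_remove[OF \<open>finite C\<close> \<open>f j \<in> C\<close>, of "P j"] \<open>P j (f j)\<close> by simp
  qed
  also have "\<dots> = card C * (\<Sum>i\<in>R. ln_fact_root (card {k\<in>C. P i k}))"
    by (simp add: sum_distrib_left)
  finally show ?thesis .
qed

lemma card_perm_terms_fix:
  "i \<in> R \<Longrightarrow> k \<in> C \<Longrightarrow> P i k \<Longrightarrow>
    card {f \<in> perm_terms R C P. f i = k} = card (perm_terms (R - {i}) (C - {k}) P)"
  by (rule bij_betw_same_card[OF bij_betw_perm_terms_fix])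

lemma card_perm_terms_le_of_minors:
  assumes "finite R" "finite C" "card R = card C" "R \<noteq> {}"
    and minors: "\<And>i k. i \<in> R \<Longrightarrow> k \<in> C \<Longrightarrow> P i k \<Longrightarrow> card (perm_terms (R - {i}) (C - {k}) P)
      \<le> exp (\<Sum>j\<in>R - {i}. ln_fact_root (card {l\<in>C - {k}. P j l}))"
  shows "card (perm_terms R C P) \<le> exp (\<Sum>i\<in>R. ln_fact_root (card {k\<in>C. P i k}))"
proof (cases "perm_terms R C P = {}")
  case True
  then show ?thesis by simp
next
  case False
  define S where "S = perm_terms R C P"
  define N where "N = real (card S)"
  define L where "L = (\<Sum>i\<in>R. ln_fact_root (card {k\<in>C. P i k}))"
  define fibre where "fibre i f = real (card {g\<in>S. g i = f i})" for i f
  have "finite S"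
    using assms by (simp add: S_def finite_perm_terms)
  with False have "N > 0"
    by (simp add: S_def N_def card_gt_0_iff)
  have ln_fibre: "ln (fibre i f) \<le> (\<Sum>j\<in>R - {i}. ln_fact_root (card {k\<in>C - {f i}. P j k}))"
    if "f \<in> S" "i \<in> R" for f i
  proof -
    have "f i \<in> C" "P i (f i)"
      using that by (auto simp: S_def perm_terms_def)
    then have "fibre i f \<le> exp (\<Sum>j\<in>R - {i}. ln_fact_root (card {k\<in>C - {f i}. P j k}))"
      using minors[OF \<open>i \<in> R\<close>] card_perm_terms_fix[of i R "f i" C P] \<open>i \<in> R\<close>
      by (simp add: fibre_def S_def)
    moreover have "fibre i f > 0"
      using that \<open>finite S\<close> by (auto simp: fibre_def card_gt_0_iff)
    ultimately show ?thesis
      by (simp add: ln_le_iff_le_exp)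
  qed
  have entropy: "N * ln N \<le> N * ln (card {k\<in>C. P i k}) + (\<Sum>f\<in>S. ln (fibre i f))" if "i \<in> R" for i
    using card_ln_card_le_sum_ln_card_fibres[OF \<open>finite S\<close>, of "{k\<in>C. P i k}" "\<lambda>f. f i"] that assms
    by (auto simp: N_def fibre_def S_def perm_terms_def)
  have "card R * (N * ln N) \<le> (\<Sum>i\<in>R. N * ln (card {k\<in>C. P i k}) + (\<Sum>f\<in>S. ln (fibre i f)))"
    using sum_mono[OF entropy] by simp
  also have "\<dots> = (\<Sum>f\<in>S. \<Sum>i\<in>R. ln (card {k\<in>C. P i k}) + ln (fibre i f))"
    by (simp add: N_def sum.distrib sum_distrib_left sum.swap[of _ S])
  also have "\<dots> \<le> (\<Sum>f\<in>S. \<Sum>i\<in>R.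
      ln (card {k\<in>C. P i k}) + (\<Sum>j\<in>R - {i}. ln_fact_root (card {k\<in>C - {f i}. P j k})))"
    using ln_fibre by (intro sum_mono add_left_mono)
  also have "\<dots> = (\<Sum>f\<in>S. card R * L)"
    using sum_ln_fact_root_minors[OF assms(1-3)] assms(3)
    by (intro sum.cong) (simp_all add: S_def L_def)
  also have "\<dots> = card R * (N * L)"
    by (simp add: N_def)
  finally have "ln N \<le> L"
    using \<open>N > 0\<close> \<open>finite R\<close> \<open>R \<noteq> {}\<close> by (simp add: card_gt_0_iff)
  then show ?thesis
    using ln_le_iff_le_exp[OF \<open>N > 0\<close>] by (simp add: N_def S_def L_def)
qed

theorem card_perm_terms_le_bregman:
  assumes "finite R" "finite C" "card R = card C"
  shows "card (perm_terms R C P) \<le> exp (\<Sum>i\<in>R. ln_fact_root (card {k\<in>C. P i k}))"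
  using assms
proof (induction "card R" arbitrary: R C)
  case 0
  then have "perm_terms R C P \<subseteq> {\<lambda>_. undefined}"
    by (auto simp: perm_terms_def)
  then have "card (perm_terms R C P) \<le> card {\<lambda>_::'a. undefined :: 'b}"
    by (rule card_mono[rotated]) simp
  with 0 show ?case by simp
next
  case (Suc n R C)
  show ?case
  proof (rule card_perm_terms_le_of_minors[OF Suc.prems])
    show "R \<noteq> {}"
      using Suc.hyps(2) by auto
    show "card (perm_terms (R - {i}) (C - {k}) P)
        \<le> exp (\<Sum>j\<in>R - {i}. ln_fact_root (card {l\<in>C - {k}. P j l}))"
      if "i \<in> R" "k \<in> C" "P i k" for i k
      using Suc that by (intro Suc.hyps(1)) auto
  qed
qed

section \<open>Orienting the union of two involutions\<close>

definition orbit_min :: "('a \<Rightarrow> nat) \<Rightarrow> ('a \<Rightarrow> 'a) \<Rightarrow> 'a \<Rightarrow> nat" where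
  "orbit_min key f x = Min (key ` orbit f x)"

text \<open>Evaluated at the permutation \<open>orient\<close> constructed below, \<open>leads\<close> recovers \<open>lower\<close>:
  this is how a pair of matchings is decoded from its orientation.\<close>
definition leads :: "('a \<Rightarrow> nat) \<Rightarrow> ('a \<Rightarrow> 'a) \<Rightarrow> 'a \<Rightarrow> bool" where
  "leads key s x \<longleftrightarrow> orbit_min key (s \<circ> s) x < orbit_min key (s \<circ> s) (s x)"

locale involution_pair =
  fixes V :: "'a set" and m1 m2 :: "'a \<Rightarrow> 'a" and key :: "'a \<Rightarrow> nat"
  assumes finite_V: "finite V"
    and m1_permutes: "m1 permutes V" and m2_permutes: "m2 permutes V"
    and m1_m1 [simp]: "m1 (m1 x) = x" and m2_m2 [simp]: "m2 (m2 x) = x"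
    and m1_neq: "x \<in> V \<Longrightarrow> m1 x \<noteq> x" and m2_neq: "x \<in> V \<Longrightarrow> m2 x \<noteq> x"
    and inj_key: "inj_on key V"
begin

definition rot :: "'a \<Rightarrow> 'a" where
  "rot x = m2 (m1 x)"

text \<open>\<open>rot\<close> splits each alternating cycle of \<open>m1\<close> and \<open>m2\<close> into two orbits exchanged
  by \<open>m1\<close> (for a doubled edge \<open>{x, m1 x}\<close> these are \<open>{x}\<close> and \<open>{m1 x}\<close>). \<open>orient\<close>
  leaves the orbit with the smaller key via \<open>m1\<close> and the other one via \<open>m2\<close>, so
  \<open>orient \<circ> orient\<close> is \<open>rot\<close> on the former and \<open>rot\<inverse>\<close> on the latter.\<close>
definition lower :: "'a \<Rightarrow> bool" where
  "lower x \<longleftrightarrow> orbit_min key rot x < orbit_min key rot (m1 x)"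

definition orient :: "'a \<Rightarrow> 'a" where
  "orient x = (if lower x then m1 x else m2 x)"

lemma rot_permutes: "rot permutes V"
proof -
  have "rot = m2 \<circ> m1"
    by (simp add: fun_eq_iff rot_def)
  then show ?thesis
    using permutes_compose[OF m1_permutes m2_permutes] by simp
qed

lemma permutation_rot: "permutation rot"
  using rot_permutes finite_V by (auto simp: permutation_permutes)

lemma rot_m1_rot: "rot (m1 (rot x)) = m1 x"
  by (simp add: rot_def)

lemma rot_m2_rot: "rot (m2 (rot x)) = m2 x"
  by (simp add: rot_def)

lemma funpow_rot_m1: "(rot ^^ n) (m1 ((rot ^^ n) x)) = m1 x"
proof (induction n arbitrary: x)
  case (Suc n)
  have inner: "(rot ^^ Suc n) x = rot ((rot ^^ n) x)"
    by simp
  have "(rot ^^ Suc n) (m1 ((rot ^^ Suc n) x)) = (rot ^^ n) (rot (m1 (rot ((rot ^^ n) x))))"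
    by (subst inner) (simp only: funpow_Suc_right o_apply)
  then show ?case by (simp only: rot_m1_rot Suc.IH)
qed simp

lemma funpow_rot_m2: "(rot ^^ n) (m2 ((rot ^^ n) x)) = m2 x"
proof (induction n arbitrary: x)
  case (Suc n)
  have inner: "(rot ^^ Suc n) x = rot ((rot ^^ n) x)"
    by simp
  have "(rot ^^ Suc n) (m2 ((rot ^^ Suc n) x)) = (rot ^^ n) (rot (m2 (rot ((rot ^^ n) x))))"
    by (subst inner) (simp only: funpow_Suc_right o_apply)
  then show ?case by (simp only: rot_m2_rot Suc.IH)
qed simp

lemma orbit_rot_altdef: "orbit rot x = {(rot ^^ n) x | n. True}"
  by (rule orbit_altdef_permutation[OF permutation_rot])

lemma funpow_rot_in: "x \<in> V \<Longrightarrow> (rot ^^ n) x \<in> V"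
  by (induction n) (simp_all add: permutes_in_image[OF rot_permutes])

text \<open>Alternating cycles are even: if \<open>x = rot\<^sup>n (m1 x)\<close>, the midpoint of this \<open>rot\<close>-path
  is a fixed point of \<open>m1\<close> (\<open>n\<close> even) or of \<open>m2\<close> (\<open>n\<close> odd).\<close>
lemma not_in_orbit_rot_m1:
  assumes "x \<in> V"
  shows "x \<notin> orbit rot (m1 x)"
proof
  assume "x \<in> orbit rot (m1 x)"
  then obtain n where n: "x = (rot ^^ n) (m1 x)"
    by (auto simp: orbit_rot_altdef)
  obtain a where "n = a + a \<or> n = Suc (a + a)"
    by (metis oddE evenE mult_2 Suc_eq_plus1)
  then show False
  proof
    assume "n = a + a"
    define w where "w = (rot ^^ a) (m1 x)"
    have "(rot ^^ a) w = x"
      using n \<open>n = a + a\<close> by (simp add: w_def funpow_add)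
    then have "m1 w = w"
      using funpow_rot_m1[of a w] by (simp add: w_def)
    moreover have "w \<in> V"
      unfolding w_def by (intro funpow_rot_in) (simp add: assms permutes_in_image[OF m1_permutes])
    ultimately show False using m1_neq by blast
  next
    assume "n = Suc (a + a)"
    define w where "w = (rot ^^ a) (m2 x)"
    have "x = (rot ^^ (a + a)) (rot (m1 x))"
      using n \<open>n = Suc (a + a)\<close> by (simp only: funpow_Suc_right o_apply)
    then have "(rot ^^ a) w = x"
      by (simp add: w_def funpow_add rot_def)
    then have "m2 w = w"
      using funpow_rot_m2[of a w] by (simp add: w_def)
    moreover have "w \<in> V"
      unfolding w_def by (intro funpow_rot_in) (simp add: assms permutes_in_image[OF m2_permutes])
    ultimately show False using m2_neq by blast
  qed
qed

lemma orbit_rot_eq: "y \<in> orbit rot x \<Longrightarrow> orbit rot y = orbit rot x"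
  using cyclic_on_orbit'[OF permutation_rot] by (rule orbit_cyclic_eq3)

lemma orbit_rot_rot: "orbit rot (rot x) = orbit rot x"
  by (rule permutation_orbit_step[OF permutation_rot])

lemma orbit_min_rot_attained:
  obtains y where "y \<in> orbit rot x" "key y = orbit_min key rot x"
proof -
  have "finite (orbit rot x)"
    by (rule finite_orbit[OF permutation_self_in_orbit[OF permutation_rot]])
  then have "orbit_min key rot x \<in> key ` orbit rot x"
    unfolding orbit_min_def using orbit_nonempty[of rot x] by (intro Min_in) simp_all
  then obtain y where "y \<in> orbit rot x" "orbit_min key rot x = key y"
    by (rule imageE)
  then show ?thesis
    using that[of y] by simp
qed

lemma orbit_min_rot_m1_neq:
  assumes "x \<in> V"
  shows "orbit_min key rot (m1 x) \<noteq> orbit_min key rot x"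
proof
  assume eq: "orbit_min key rot (m1 x) = orbit_min key rot x"
  obtain a where a: "a \<in> orbit rot x" "key a = orbit_min key rot x"
    by (rule orbit_min_rot_attained)
  obtain b where b: "b \<in> orbit rot (m1 x)" "key b = orbit_min key rot (m1 x)"
    by (rule orbit_min_rot_attained)
  have "m1 x \<in> V"
    using assms by (simp add: permutes_in_image[OF m1_permutes])
  then have "a \<in> V" "b \<in> V"
    using a b assms permutes_orbit_subset[OF rot_permutes] by blast+
  with a b eq have "a = b"
    using inj_onD[OF inj_key] by metis
  then have "orbit rot (m1 x) = orbit rot x"
    using a b orbit_rot_eq by metis
  then show False
    using not_in_orbit_rot_m1[OF assms] permutation_self_in_orbit[OF permutation_rot] by blast
qed

lemma lower_m1: "x \<in> V \<Longrightarrow> lower (m1 x) \<longleftrightarrow> \<not> lower x"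
  unfolding lower_def using orbit_min_rot_m1_neq by fastforce

lemma lower_rot: "lower (rot x) \<longleftrightarrow> lower x"
proof -
  have "orbit rot (m1 (rot x)) = orbit rot (m1 x)"
    using orbit_rot_rot[of "m1 (rot x)"] by (simp only: rot_m1_rot)
  then show ?thesis
    by (simp add: lower_def orbit_min_def orbit_rot_rot)
qed

lemma lower_m2: "x \<in> V \<Longrightarrow> lower (m2 x) \<longleftrightarrow> \<not> lower x"
  using lower_rot[of "m1 x"] lower_m1[of x] by (simp add: rot_def)

lemma lower_orbit_rot: "y \<in> orbit rot x \<Longrightarrow> lower y \<longleftrightarrow> lower x"
proof -
  have "lower ((rot ^^ n) x) \<longleftrightarrow> lower x" for n
    by (induction n) (simp_all add: lower_rot)
  then show "y \<in> orbit rot x \<Longrightarrow> lower y \<longleftrightarrow> lower x"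
    by (auto simp: orbit_rot_altdef)
qed

lemma orient_in: "x \<in> V \<Longrightarrow> orient x \<in> V"
  by (simp add: orient_def permutes_in_image[OF m1_permutes] permutes_in_image[OF m2_permutes])

lemma orient_permutes: "orient permutes V"
proof (rule inj_imp_permutes[OF _ finite_V orient_in])
  show "inj_on orient V"
  proof (rule inj_onI)
    fix x y assume "x \<in> V" "y \<in> V" "orient x = orient y"
    then show "x = y"
      unfolding orient_def
      by (cases "lower x"; cases "lower y") (metis m1_m1 m2_m2 lower_m1 lower_m2)+
  qed
  show "orient x = x" if "x \<notin> V" for x
    using that by (simp add: orient_def permutes_not_in[OF m1_permutes] permutes_not_in[OF m2_permutes])
qed

lemma orbit_orient_orient:
  assumes "x \<in> V"
  shows "orbit (orient \<circ> orient) x = orbit rot x"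
proof (cases "lower x")
  case True
  have "orient (orient y) = rot y" if "y \<in> orbit rot x" for y
  proof -
    have "y \<in> V" "lower y"
      using that assms True permutes_orbit_subset[OF rot_permutes] lower_orbit_rot by blast+
    then show ?thesis
      by (simp add: orient_def lower_m1 rot_def)
  qed
  then show ?thesis
    by (intro orbit_cong permutation_self_in_orbit[OF permutation_rot]) simp
next
  case False
  have "permutation (inv rot)"
    by (rule permutation_inverse[OF permutation_rot])
  have "orient (orient y) = inv rot y" if "y \<in> orbit (inv rot) x" for y
  proof -
    have "y \<in> orbit rot x"
      using that orbit_inv_eq[OF permutation_rot] by simp
    then have "y \<in> V" "\<not> lower y"
      using assms False permutes_orbit_subset[OF rot_permutes] lower_orbit_rot by blast+
    then have "orient (orient y) = m1 (m2 y)"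
      by (simp add: orient_def lower_m2)
    also have "\<dots> = inv rot y"
      using permutes_inv_eq[OF rot_permutes, of y "m1 (m2 y)"] by (simp add: rot_def)
    finally show ?thesis .
  qed
  then have "orbit (orient \<circ> orient) x = orbit (inv rot) x"
    by (intro orbit_cong permutation_self_in_orbit[OF \<open>permutation (inv rot)\<close>]) simp
  then show ?thesis
    using orbit_inv_eq[OF permutation_rot] by simp
qed

lemma leads_orient_iff_lower:
  assumes "x \<in> V"
  shows "leads key orient x \<longleftrightarrow> lower x"
proof -
  have "orbit rot (orient x) = orbit rot (m1 x)"
    using orbit_rot_rot[of "m1 x"] by (simp add: orient_def rot_def)
  then show ?thesis
    using assms orient_in
    by (simp add: leads_def lower_def orbit_min_def orbit_orient_orient)
qed

lemma m1_eq_orient: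
  assumes "x \<in> V"
  shows "m1 x = (if leads key orient x then orient x else inv orient x)"
proof (cases "lower x")
  case False
  then have "orient (m1 x) = x"
    using assms by (simp add: orient_def lower_m1)
  then show ?thesis
    using assms False permutes_inv_eq[OF orient_permutes, of x "m1 x"]
    by (simp add: leads_orient_iff_lower)
qed (simp add: assms leads_orient_iff_lower orient_def)

lemma m2_eq_orient:
  assumes "x \<in> V"
  shows "m2 x = (if leads key orient x then inv orient x else orient x)"
proof (cases "lower x")
  case True
  then have "orient (m2 x) = x"
    using assms by (simp add: orient_def lower_m2)
  then show ?thesis
    using assms True permutes_inv_eq[OF orient_permutes, of x "m2 x"]
    by (simp add: leads_orient_iff_lower)
qed (simp add: assms leads_orient_iff_lower orient_def)

end

section \<open>Pairs of perfect matchings\<close>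

text \<open>Extended by the identity outside \<open>V\<close>, so that \<open>mate V M\<close> permutes \<open>V\<close>.\<close>
definition mate :: "'a set \<Rightarrow> 'a set set \<Rightarrow> 'a \<Rightarrow> 'a" where
  "mate V M v = (if v \<in> V then (THE u. {v, u} \<in> M) else v)"

context
  fixes V :: "'a set" and E :: "'a \<Rightarrow> 'a \<Rightarrow> bool" and M :: "'a set set"
  assumes graph: "simple_graph V E" and matching: "perfect_matching V E M"
begin

lemma perfect_matching_edge:
  assumes "{u, v} \<in> M"
  shows "E u v"
proof -
  obtain a b where "{u, v} = {a, b}" "E a b"
    using assms matching by (auto simp: perfect_matching_def graph_edges_def)
  then show ?thesis
    using graph by (auto simp: doubleton_eq_iff simple_graph_def)
qed

lemma perfect_matching_ex1_partner:
  assumes "v \<in> V"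
  shows "\<exists>!u. {v, u} \<in> M"
proof -
  obtain e where e: "e \<in> M" "v \<in> e" and e_unique: "\<And>e'. e' \<in> M \<Longrightarrow> v \<in> e' \<Longrightarrow> e' = e"
    using matching assms unfolding perfect_matching_def by blast
  obtain a b where "e = {a, b}"
    using e matching unfolding perfect_matching_def graph_edges_def by blast
  then obtain u where "e = {v, u}"
    using e(2) by blast
  moreover have "u' = u" if "{v, u'} \<in> M" for u'
  proof -
    have "{v, u'} = {v, u}"
      using e_unique[OF that] \<open>e = {v, u}\<close> by simp
    moreover have "E v u"
      using perfect_matching_edge e(1) \<open>e = {v, u}\<close> by simp
    then have "u \<noteq> v"
      using graph by (auto simp: simple_graph_def)
    ultimately show ?thesis
      by (auto simp: doubleton_eq_iff)
  qed
  ultimately show ?thesis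
    using e(1) by blast
qed

lemma mate_in_matching: "v \<in> V \<Longrightarrow> {v, mate V M v} \<in> M"
  unfolding mate_def using theI'[OF perfect_matching_ex1_partner] by simp

lemma mate_eqI: "v \<in> V \<Longrightarrow> {v, u} \<in> M \<Longrightarrow> mate V M v = u"
  unfolding mate_def using the1_equality[OF perfect_matching_ex1_partner] by simp

lemma edge_mate: "v \<in> V \<Longrightarrow> E v (mate V M v)"
  by (rule perfect_matching_edge[OF mate_in_matching])

lemma mate_in: "v \<in> V \<Longrightarrow> mate V M v \<in> V"
  using edge_mate graph by (auto simp: simple_graph_def)

lemma mate_neq: "v \<in> V \<Longrightarrow> mate V M v \<noteq> v"
  using edge_mate graph by (fastforce simp: simple_graph_def)

lemma mate_mate: "mate V M (mate V M v) = v"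
proof (cases "v \<in> V")
  case True
  then have "{mate V M v, v} \<in> M"
    using mate_in_matching by (simp add: insert_commute)
  then show ?thesis
    using True by (intro mate_eqI mate_in)
next
  case False
  then show ?thesis by (simp add: mate_def)
qed

lemma mate_permutes: "mate V M permutes V"
proof (rule inj_imp_permutes)
  show "inj_on (mate V M) V"
    by (metis inj_onI mate_mate)
  show "finite V"
    using graph by (simp add: simple_graph_def)
  show "mate V M v \<in> V" if "v \<in> V" for v
    using that by (rule mate_in)
  show "mate V M v = v" if "v \<notin> V" for v
    using that by (simp add: mate_def)
qed

lemma perfect_matching_eq_mate_edges: "M = (\<lambda>v. {v, mate V M v}) ` V"
proof
  show "M \<subseteq> (\<lambda>v. {v, mate V M v}) ` V"
  proof
    fix e assume "e \<in> M"
    then obtain a b where "e = {a, b}" "a \<in> V"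
      using matching unfolding perfect_matching_def graph_edges_def by blast
    then show "e \<in> (\<lambda>v. {v, mate V M v}) ` V"
      using mate_eqI \<open>e \<in> M\<close> by blast
  qed
qed (auto intro: mate_in_matching)

end

lemma perfect_matching_eqI:
  assumes "simple_graph V E" "perfect_matching V E M" "perfect_matching V E N"
    and "\<And>v. v \<in> V \<Longrightarrow> mate V M v = mate V N v"
  shows "M = N"
proof -
  have "(\<lambda>v. {v, mate V M v}) ` V = (\<lambda>v. {v, mate V N v}) ` V"
    by (rule image_cong) (simp_all add: assms(4))
  then show ?thesis
    using perfect_matching_eq_mate_edges[OF assms(1,2)] perfect_matching_eq_mate_edges[OF assms(1,3)]
    by simp
qed

lemma involution_pair_mates:
  assumes "simple_graph V E" "perfect_matching V E M1" "perfect_matching V E M2" "inj_on key V"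
  shows "involution_pair V (mate V M1) (mate V M2) key"
  using mate_permutes[OF assms(1,2)] mate_permutes[OF assms(1,3)]
    mate_mate[OF assms(1,2)] mate_mate[OF assms(1,3)]
    mate_neq[OF assms(1,2)] mate_neq[OF assms(1,3)] assms(1,4)
  by unfold_locales (simp_all add: simple_graph_def)

definition matching_orientation ::
    "('a \<Rightarrow> nat) \<Rightarrow> 'a set \<Rightarrow> 'a set set \<Rightarrow> 'a set set \<Rightarrow> 'a \<Rightarrow> 'a" where
  "matching_orientation key V M1 M2 =
    restrict (involution_pair.orient (mate V M1) (mate V M2) key) V"

context
  fixes V :: "'a set" and E :: "'a \<Rightarrow> 'a \<Rightarrow> bool" and key :: "'a \<Rightarrow> nat"
  assumes graph: "simple_graph V E" and inj_key: "inj_on key V"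
begin

lemma matching_orientation_in_perm_terms:
  assumes "perfect_matching V E M1" "perfect_matching V E M2"
  shows "matching_orientation key V M1 M2 \<in> perm_terms V V E"
proof -
  interpret involution_pair V "mate V M1" "mate V M2" key
    using involution_pair_mates[OF graph assms inj_key] .
  have "E x (orient x)" if "x \<in> V" for x
    using that edge_mate[OF graph] assms by (simp add: orient_def)
  then show ?thesis
    using orient_in permutes_inj_on[OF orient_permutes]
    by (auto simp: matching_orientation_def perm_terms_def inj_on_def)
qed

lemma matching_orientation_inject:
  assumes "perfect_matching V E M1" "perfect_matching V E M2"
    and "perfect_matching V E N1" "perfect_matching V E N2"
    and eq: "matching_orientation key V M1 M2 = matching_orientation key V N1 N2"
  shows "M1 = N1 \<and> M2 = N2"
proof -
  interpret A: involution_pair V "mate V M1" "mate V M2" key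
    using involution_pair_mates[OF graph assms(1,2) inj_key] .
  interpret B: involution_pair V "mate V N1" "mate V N2" key
    using involution_pair_mates[OF graph assms(3,4) inj_key] .
  have "A.orient = B.orient"
  proof
    fix x show "A.orient x = B.orient x"
      using eq permutes_not_in[OF A.orient_permutes] permutes_not_in[OF B.orient_permutes]
      by (cases "x \<in> V") (auto simp: matching_orientation_def fun_eq_iff dest: spec[of _ x])
  qed
  then have mates: "mate V M1 x = mate V N1 x" "mate V M2 x = mate V N2 x" if "x \<in> V" for x
    using A.m1_eq_orient B.m1_eq_orient A.m2_eq_orient B.m2_eq_orient that by simp_all
  show ?thesis
    using perfect_matching_eqI[OF graph assms(1,3) mates(1)]
      perfect_matching_eqI[OF graph assms(2,4) mates(2)]
    by blast
qed

end

theorem perfmat_sq_le_card_perm_terms: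
  assumes graph: "simple_graph V E"
  shows "perfmat V E ^ 2 \<le> card (perm_terms V V E)"
proof -
  have "finite V"
    using graph by (simp add: simple_graph_def)
  then obtain key :: "'a \<Rightarrow> nat" where "inj_on key V"
    using finite_imp_inj_to_nat_seg by blast
  define PM where "PM = {M. perfect_matching V E M}"
  have "inj_on (\<lambda>(M1, M2). matching_orientation key V M1 M2) (PM \<times> PM)"
    using matching_orientation_inject[OF graph \<open>inj_on key V\<close>] by (auto simp: PM_def inj_on_def)
  moreover have "(\<lambda>(M1, M2). matching_orientation key V M1 M2) ` (PM \<times> PM) \<subseteq> perm_terms V V E"
    using matching_orientation_in_perm_terms[OF graph \<open>inj_on key V\<close>] by (auto simp: PM_def)
  ultimately have "card (PM \<times> PM) \<le> card (perm_terms V V E)"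
    using card_inj_on_le finite_perm_terms[OF \<open>finite V\<close> \<open>finite V\<close>] by blast
  then show ?thesis
    by (simp add: PM_def perfmat_def card_cartesian_product power2_eq_square)
qed

lemma perfmat_eq_0_if_degree_eq_0:
  assumes "simple_graph V E" "v \<in> V" "degree V E v = 0"
  shows "perfmat V E = 0"
proof -
  have "\<not> perfect_matching V E M" for M
  proof
    assume "perfect_matching V E M"
    then have "mate V M v \<in> {u \<in> V. E v u}"
      using edge_mate[OF assms(1)] mate_in[OF assms(1)] assms(2) by simp
    then show False
      using assms by (auto simp: degree_def simple_graph_def)
  qed
  then show ?thesis
    by (simp add: perfmat_def)
qed

lemma bregman_factor_sq:
  assumes "d \<ge> 1"
  shows "bregman_factor d ^ 2 = exp (ln_fact_root d)"
proof -
  have "bregman_factor d ^ 2 = exp (ln (fact d) / (2 * d)) ^ 2"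
    using assms by (simp add: bregman_factor_def powr_def)
  also have "\<dots> = exp (ln_fact_root d)"
    by (simp add: ln_fact_root_def flip: exp_of_nat_mult)
  finally show ?thesis .
qed

theorem theorem4p1:
  fixes V :: "'a set" and E :: "'a \<Rightarrow> 'a \<Rightarrow> bool"
  assumes "simple_graph V E"
    and "even (card V)"
  shows "real (perfmat V E) \<le> (\<Prod>v\<in>V. bregman_factor (degree V E v))"
proof (cases "\<exists>v\<in>V. degree V E v = 0")
  case True
  then show ?thesis
    using perfmat_eq_0_if_degree_eq_0[OF assms(1)] by (auto simp: prod_nonneg bregman_factor_def)
next
  case False
  have "finite V"
    using assms(1) by (simp add: simple_graph_def)
  have "real (perfmat V E) ^ 2 \<le> card (perm_terms V V E)"
    using perfmat_sq_le_card_perm_terms[OF assms(1)] by (simp flip: of_nat_power)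
  also have "\<dots> \<le> exp (\<Sum>v\<in>V. ln_fact_root (degree V E v))"
    using card_perm_terms_le_bregman[OF \<open>finite V\<close> \<open>finite V\<close> refl] by (simp add: degree_def)
  also have "\<dots> = (\<Prod>v\<in>V. bregman_factor (degree V E v)) ^ 2"
    using False by (simp add: exp_sum[OF \<open>finite V\<close>] bregman_factor_sq Suc_le_eq prod_power_distrib)
  finally show ?thesis
    by (rule power2_le_imp_le) (simp add: prod_nonneg bregman_factor_def)
qed

end
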